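(* Let $K$ be an algebraically closed field of characteristic $0$ and let $d,n$ be integers with $1<d<n$ and $\gcd(n,d)=1$. Let $e$ be a positive integer, $m:=n+ed$, and assume $n+ed>d(de-1)$. Let $v(x)\in K[x]$ satisfy $\deg(v)<m/d$ and be such that the polynomial $(1+x)^m-v(x)^d$ has all its nonzero roots simple and has $0$ as a root of multiplicity $ed$ or $ed+1$. Then $f(x):=\dfrac{(1+x)^m-v(x)^d}{x^{ed}}$ is a polynomial of degree $n$ without repeated roots, and the corresponding curve $\mathcal{C}_{f,d}$ has a point $P\in\mathcal{C}_{f,d}(K)$ with abscissa $x(P)=-1$ whose order is $m$.
   Context: For $f(x)\in K[x]$ of degree $n$ without repeated roots, $\mathcal{C}_{f,d}$ is the smooth projective model of $y^d=f(x)$; it has a unique point at infinity $O$, and $\mathcal{C}_{f,d}\setminus\{O\}$ is identified with the affine curve $y^d=f(x)$. $\mathcal{C}_{f,d}$ is identified with its image in its Jacobian via $P\mapsto \operatorname{cl}((P)-(O))$ (linear equivalence class); $P$ has order $m$ if $\operatorname{cl}((P)-(O))$ has order $m$ in $J(\mathcal{C}_{f,d})(K)$. *)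

theory Defs
  imports "HOL-Computational_Algebra.Polynomial"
begin

definition alg_closed :: "'a::field itself \<Rightarrow> bool" where
  "alg_closed _ \<longleftrightarrow> (\<forall>p::'a poly. degree p \<ge> 1 \<longrightarrow> (\<exists>x. poly p x = 0))"

text \<open>Regular functions on the affine curve y^d = f(x) are represented by
  h(x,y) = sum_{j<d} a_j(x) y^j.  Their pole order at the unique point O at
  infinity is max_j (d * deg a_j + n * j), n = deg f (x has a pole of order d,
  y of order n at O, gcd(n,d)=1).\<close>

definition curve_fun_eval :: "nat \<Rightarrow> (nat \<Rightarrow> 'a::field poly) \<Rightarrow> 'a \<Rightarrow> 'a \<Rightarrow> 'a" where
  "curve_fun_eval d a x y = (\<Sum>j<d. poly (a j) x * y ^ j)"

definition pole_order_at_O :: "'a::field poly \<Rightarrow> nat \<Rightarrow> (nat \<Rightarrow> 'a poly) \<Rightarrow> nat" where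
  "pole_order_at_O f d a = Max {d * degree (a j) + degree f * j | j. j < d \<and> a j \<noteq> 0}"

text \<open>k(P) - k(O) is a principal divisor on C_{f,d}: there is a nonzero regular
  function on the affine part with pole of order k at O whose only affine zero is P.\<close>

definition principal_multiple :: "'a::field poly \<Rightarrow> nat \<Rightarrow> 'a \<times> 'a \<Rightarrow> nat \<Rightarrow> bool" where
  "principal_multiple f d P k \<longleftrightarrow>
     (\<exists>a::nat \<Rightarrow> 'a poly. (\<exists>j<d. a j \<noteq> 0) \<and> pole_order_at_O f d a = k \<and>
        (\<forall>x y. y ^ d = poly f x \<longrightarrow> (curve_fun_eval d a x y = 0 \<longleftrightarrow> (x, y) = P)))"

text \<open>Order of cl((P)-(O)) in the Jacobian of C_{f,d}.\<close>

definition point_order :: "'a::field poly \<Rightarrow> nat \<Rightarrow> 'a \<times> 'a \<Rightarrow> nat \<Rightarrow> bool" where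
  "point_order f d P m \<longleftrightarrow> m > 0 \<and> principal_multiple f d P m \<and>
     (\<forall>k. 0 < k \<and> k < m \<longrightarrow> \<not> principal_multiple f d P k)"

end

theory Submission
  imports Defs
begin

text \<open>
  Fix \<zeta> with \<zeta>^d = -1. The function g = v(x) - \<zeta> x^e y vanishes on the affine curve only at
  P = (-1, y0), since g = 0 forces v^d = -x^(ed) f = v^d - (1+x)^m; its pole order at O is
  max(d deg v, de + n) = m, so m(P) - m(O) is principal.

  Conversely, let h have pole order k < m and vanish only at P. The pole order bound leaves
  only h = A + B y. The norm A^d - (-B)^d f of h has -1 as its only root, hence equals
  c (1+x)^K with K = max(d deg A, d deg B + n) \<le> k. The polynomial W = \<zeta> x^e A + B v agrees
  with \<zeta> x^e h + B g on the curve, and factoring a difference of d-th powers shows that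
  (1+x)^K divides W. Since W \<noteq> 0 and d deg W \<le> K + ed, we get (d-1) K \<le> ed, which the
  hypothesis on n + ed rules out for d \<ge> 3. For d = 2 the same bounds force B to be a constant
  b and W = \<rho> (1+x)^K; then v is congruent to (\<rho>/b)(1+x)^K modulo x^e, and comparing with
  v^2 = (1+x)^m modulo x^2 gives m = 2K, although n is odd.
\<close>

lemma degree_diff_eq_left:
  fixes p q :: "'a::ring poly"
  shows "degree q < degree p \<Longrightarrow> degree (p - q) = degree p"
  using degree_add_eq_left[of "-q" p] by simp

lemma degree_diff_eq_right:
  fixes p q :: "'a::ring poly"
  shows "degree p < degree q \<Longrightarrow> degree (p - q) = degree q"
  using degree_add_eq_right[of p "-q"] by simp

lemma alg_closed_nth_root:
  fixes a :: "'a::field"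
  assumes "alg_closed TYPE('a)" "0 < d"
  obtains y where "y ^ d = a"
proof -
  have "degree (monom 1 d - [:a:]) = d"
    using assms(2) by (simp add: degree_monom_eq degree_diff_eq_left)
  then obtain y where "poly (monom 1 d - [:a:]) y = 0"
    using assms unfolding alg_closed_def by (metis One_nat_def Suc_leI)
  then show ?thesis
    using that by (simp add: poly_monom)
qed

lemma alg_closed_root_of_unity:
  assumes "alg_closed TYPE('a)" "2 \<le> d"
  obtains w :: "'a::field_char_0" where "w ^ d = 1" "w \<noteq> 1"
proof -
  define q :: "'a poly" where "q = (\<Sum>i<d. [:0,1:] ^ i)"
  have "[:0,1:] ^ d - 1 = ([:0,1:] - 1) * q"
    using power_diff_sumr2[of "[:0,1::'a:]" d 1] by (simp add: q_def)
  then have factor: "[:0,1:] ^ d - 1 = [:-1,1:] * q"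
    by (simp add: one_pCons)
  have deg: "degree ([:0,1:] ^ d - (1::'a poly)) = d"
    using assms(2) by (simp add: degree_diff_eq_left degree_linear_power)
  with factor assms(2) have "q \<noteq> 0"
    by auto
  then have "degree ([:-1,1:] * q) = 1 + degree q"
    by (subst degree_mult_eq) auto
  with factor deg have "degree q = d - 1"
    by simp
  then have "\<exists>w. poly q w = 0"
    using assms unfolding alg_closed_def by simp
  then obtain w where w: "poly q w = 0" ..
  then have "w ^ d = 1"
    using arg_cong[OF factor, of "\<lambda>p. poly p w"] by simp
  moreover have "w \<noteq> 1"
    using w assms(2) by (auto simp: q_def poly_sum)
  ultimately show ?thesis
    using that by blast
qed

lemma alg_closed_single_root_poly:
  fixes p :: "'a::field poly"
  assumes "alg_closed TYPE('a)" "p \<noteq> 0" "\<And>x. poly p x = 0 \<Longrightarrow> x = a"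
  shows "p = smult (lead_coeff p) ([:-a,1:] ^ degree p)"
proof -
  obtain r where r: "p = [:-a,1:] ^ order a p * r" "\<not> [:-a,1:] dvd r"
    using order_decomp[OF assms(2)] by blast
  have "degree r = 0"
  proof (rule ccontr)
    assume "degree r \<noteq> 0"
    then obtain x where "poly r x = 0"
      using assms(1) unfolding alg_closed_def by force
    moreover have "x = a"
      using assms(3) calculation by (subst (asm) r(1)) simp
    ultimately show False
      using r(2) by (simp add: poly_eq_0_iff_dvd)
  qed
  then obtain c where "r = [:c:]"
    by (metis degree_eq_zeroE)
  with r(1) have p: "p = smult c ([:-a,1:] ^ order a p)"
    by simp
  with assms(2) have "c \<noteq> 0"
    by auto
  then have "lead_coeff (smult c ([:-a,1:] ^ k)) = c" "degree (smult c ([:-a,1:] ^ k)) = k" for k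
    by (simp_all add: degree_linear_power coeff_linear_power)
  from this[of "order a p", folded p] show ?thesis
    using p by metis
qed

lemma linear_power_dvd_mult_cancel:
  fixes p q :: "'a::idom poly"
  assumes "[:-a,1:] ^ k dvd p * q" "poly q a \<noteq> 0"
  shows "[:-a,1:] ^ k dvd p"
proof (cases "p = 0")
  case False
  moreover have "q \<noteq> 0"
    using assms(2) by auto
  ultimately have "order a (p * q) = order a p"
    using assms(2) by (simp add: order_mult order_0I)
  with assms False show ?thesis
    by (auto simp: order_divides)
qed simp

lemma coeff_one_plus_X_power:
  "coeff ([:1,1::'a::comm_semiring_1:] ^ n) 0 = 1"
  "coeff ([:1,1::'a::comm_semiring_1:] ^ n) 1 = of_nat n"
  by (simp add: coeff_0_power)
    (cases n; simp add: coeff_linear_poly_power del: power_Suc)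

lemma X_squared_dvd_diff_linear_powers:
  fixes a b :: "'a::field_char_0"
  assumes "[:0,1:] ^ 2 dvd smult a ([:1,1:] ^ i) - smult b ([:1,1:] ^ j)" "a \<noteq> 0"
  shows "i = j"
proof -
  obtain q where q: "smult a ([:1,1:] ^ i) - smult b ([:1,1:] ^ j) = pCons 0 (pCons 0 q)"
    using assms(1) by (auto simp: power2_eq_square)
  from arg_cong[OF q, of "\<lambda>p. coeff p 0"] arg_cong[OF q, of "\<lambda>p. coeff p 1"]
  have "a = b" "a * of_nat i = b * of_nat j"
    by (simp_all add: coeff_one_plus_X_power coeff_one_plus_X_power(2)[unfolded One_nat_def])
  with assms(2) show "i = j"
    by simp
qed

lemma order_diff_powers_common_root:
  fixes p q :: "'a::idom poly"
  assumes "poly p a = 0" "poly q a = 0" "2 \<le> i" "2 \<le> j" "p ^ i - q ^ j \<noteq> 0"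
  shows "2 \<le> order a (p ^ i - q ^ j)"
proof -
  have "[:-a,1:] ^ 2 dvd p ^ i" "[:-a,1:] ^ 2 dvd q ^ j"
    using assms(1-4) by (auto simp: poly_eq_0_iff_dvd intro: dvd_trans[OF le_imp_power_dvd dvd_power_same])
  then have "[:-a,1:] ^ 2 dvd p ^ i - q ^ j"
    by (rule dvd_diff)
  with assms(5) show ?thesis
    by (simp add: order_divides)
qed

lemma rsquarefree_div_X_power:
  fixes p :: "'a::field poly"
  assumes "p \<noteq> 0" "order 0 p = k \<or> order 0 p = k + 1"
    and "\<And>a. a \<noteq> 0 \<Longrightarrow> poly p a = 0 \<Longrightarrow> order a p = 1"
  shows "rsquarefree (p div [:0,1:] ^ k)"
proof -
  define q where "q = p div [:0,1:] ^ k"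
  have "[:0,1:] ^ k dvd p"
    using assms(1,2) order_divides[of 0 k p] by auto
  then have p: "p = [:0,1:] ^ k * q"
    by (simp add: q_def)
  with assms(1) have "q \<noteq> 0"
    by auto
  have order_p: "order a p = order a ([:0,1:] ^ k) + order a q" for a
    using p assms(1) order_mult by metis
  have "order a q = 0 \<or> order a q = 1" for a
  proof (cases "a = 0")
    case True
    have "order 0 ([:0,1:] ^ k :: 'a poly) = k"
      using order_power_n_n[of 0 k] by simp
    then show ?thesis
      unfolding True using assms(2) order_p[of 0] by arith
  next
    case False
    then have "order a ([:0,1:] ^ k) = 0"
      by (intro order_0I) simp
    moreover have "poly q a = 0 \<Longrightarrow> poly p a = 0"
      by (simp add: p)
    ultimately show ?thesis
      using assms(3)[OF False] order_p[of a] order_0I[of q a] by auto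
  qed
  with \<open>q \<noteq> 0\<close> show ?thesis
    by (simp add: rsquarefree_def q_def)
qed

lemma degree_linear_power_minus_power:
  fixes v :: "'a::idom poly"
  assumes "d * degree v < m"
  shows "degree ([:1,1:] ^ m - v ^ d) = m"
proof -
  have "degree (v ^ d) < m"
    using assms degree_power_le[of v d] by (simp add: mult.commute)
  then show ?thesis
    by (simp add: degree_diff_eq_left degree_linear_power)
qed

lemma simple_roots_imp_poly_nonzero:
  fixes v :: "'a::field poly"
  assumes "2 \<le> d" "2 \<le> m" "d * degree v < m"
    and simple: "\<forall>a. a \<noteq> 0 \<and> poly ([:1,1:] ^ m - v ^ d) a = 0 \<longrightarrow> order a ([:1,1:] ^ m - v ^ d) = 1"
    and order_0: "0 < order 0 ([:1,1:] ^ m - v ^ d)"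
  shows "poly v (-1) \<noteq> 0" "poly v 0 \<noteq> 0"
proof -
  have "[:1,1:] ^ m - v ^ d \<noteq> 0"
    using degree_linear_power_minus_power[OF assms(3)] assms(2) by auto
  show "poly v (-1) \<noteq> 0"
  proof
    assume "poly v (-1) = 0"
    then have "2 \<le> order (-1) ([:1,1:] ^ m - v ^ d)" "poly ([:1,1:] ^ m - v ^ d) (-1) = 0"
      using order_diff_powers_common_root[of "[:1,1:]" "-1" v m d] assms(1,2)
        \<open>[:1,1:] ^ m - v ^ d \<noteq> 0\<close> by (simp_all add: power_0_left)
    with simple show False
      by auto
  qed
  from order_0 have "poly ([:1,1:] ^ m - v ^ d) 0 = 0"
    using order_gt_0_iff[OF \<open>[:1,1:] ^ m - v ^ d \<noteq> 0\<close>] by blast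
  with assms(1) show "poly v 0 \<noteq> 0"
    by (auto simp: power_0_left)
qed

lemma pole_order_at_O_ge:
  assumes "j < d" "a j \<noteq> 0"
  shows "d * degree (a j) + degree f * j \<le> pole_order_at_O f d a"
proof -
  have "finite {d * degree (a j) + degree f * j | j. j < d \<and> a j \<noteq> 0}"
    by (rule finite_subset[of _ "(\<lambda>j. d * degree (a j) + degree f * j) ` {..<d}"]) auto
  with assms show ?thesis
    unfolding pole_order_at_O_def by (intro Max_ge) auto
qed

lemma pole_order_at_O_linear:
  assumes "2 \<le> d" "\<And>j. 2 \<le> j \<Longrightarrow> a j = 0" "a 0 \<noteq> 0" "a 1 \<noteq> 0"
  shows "pole_order_at_O f d a = max (d * degree (a 0)) (d * degree (a 1) + degree f)"
proof -
  have "a j \<noteq> 0 \<Longrightarrow> j < 2" for j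
    using assms(2) not_le by blast
  then have "{j. j < d \<and> a j \<noteq> 0} = {0, 1}"
    using assms(1,3,4) by (auto simp: less_2_cases_iff)
  then have "{d * degree (a j) + degree f * j | j. j < d \<and> a j \<noteq> 0}
      = (\<lambda>j. d * degree (a j) + degree f * j) ` {0, 1}"
    by blast
  then show ?thesis
    unfolding pole_order_at_O_def by simp
qed

lemma curve_fun_eval_linear:
  assumes "2 \<le> d" "\<And>j. 2 \<le> j \<Longrightarrow> j < d \<Longrightarrow> a j = 0"
  shows "curve_fun_eval d a x y = poly (a 0) x + poly (a 1) x * y"
proof -
  have "(\<Sum>j<d. poly (a j) x * y ^ j) = (\<Sum>j\<in>{0,1}. poly (a j) x * y ^ j)"
    by (rule sum.mono_neutral_right) (use assms in auto)
  then show ?thesis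
    by (simp add: curve_fun_eval_def)
qed

lemma dvd_degree_le_imp_smult:
  fixes p q :: "'a::idom poly"
  assumes "p dvd q" "q \<noteq> 0" "degree q \<le> degree p"
  obtains c where "q = smult c p"
proof -
  obtain r where r: "q = p * r"
    using assms(1) by blast
  with assms(2,3) have "degree r = 0"
    by (simp add: degree_mult_eq)
  then obtain c where "r = [:c:]"
    by (metis degree_eq_zeroE)
  with r that show ?thesis
    by simp
qed

locale torsion_point =
  fixes v f :: "'a::field_char_0 poly" and d n e m :: nat and \<zeta> y\<^sub>0 :: 'a
  assumes alg_closed: "alg_closed TYPE('a)"
    and d_ge_2: "2 \<le> d" and d_less_n: "d < n" and coprime_n_d: "coprime n d"
    and m_eq: "m = n + e * d"
    and m_large: "d * (d * e - 1) < m"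
    and degree_v: "d * degree v < m"
    and degree_f: "degree f = n"
    and f_eq: "[:0,1:] ^ (e * d) * f = [:1,1:] ^ m - v ^ d"
    and v_minus_one: "poly v (-1) \<noteq> 0"
    and v_zero: "poly v 0 \<noteq> 0"
    and zeta: "\<zeta> ^ d = -1"
    and y0: "\<zeta> * (-1) ^ e * y\<^sub>0 = poly v (-1)"
begin

lemma poly_f: "x ^ (e * d) * poly f x = (1 + x) ^ m - poly v x ^ d"
  using arg_cong[OF f_eq, of "\<lambda>p. poly p x"] by (simp add: add.commute)

lemma y0_power: "y\<^sub>0 ^ d = poly f (-1)"
proof -
  have "m \<noteq> 0"
    using m_eq d_less_n by simp
  then have "(-1) ^ (e * d) * poly f (-1) = - (poly v (-1) ^ d)"
    using poly_f[of "-1"] by simp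
  also have "poly v (-1) ^ d = \<zeta> ^ d * (-1) ^ (e * d) * y\<^sub>0 ^ d"
    unfolding y0[symmetric] by (simp add: power_mult_distrib power_mult)
  finally show ?thesis
    by (simp add: zeta)
qed

lemma y0_nonzero: "y\<^sub>0 \<noteq> 0"
  using y0 v_minus_one by auto

lemma zeta_nonzero: "\<zeta> \<noteq> 0"
  using zeta d_ge_2 by (auto simp: power_0_left)

definition torsion_fun :: "nat \<Rightarrow> 'a poly" where
  "torsion_fun j = (if j = 0 then v else if j = 1 then - smult \<zeta> ([:0,1:] ^ e) else 0)"

lemma curve_fun_eval_torsion_fun:
  "curve_fun_eval d torsion_fun x y = poly v x - \<zeta> * x ^ e * y"
  using curve_fun_eval_linear[OF d_ge_2, of torsion_fun] by (simp add: torsion_fun_def)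

lemma torsion_fun_zero_iff:
  assumes "y ^ d = poly f x"
  shows "curve_fun_eval d torsion_fun x y = 0 \<longleftrightarrow> (x, y) = (-1, y\<^sub>0)"
proof
  assume "curve_fun_eval d torsion_fun x y = 0"
  then have vx: "poly v x = \<zeta> * x ^ e * y"
    by (simp add: curve_fun_eval_torsion_fun)
  then have "poly v x ^ d = - (x ^ (e * d) * poly f x)"
    by (simp add: power_mult_distrib power_mult zeta assms)
  then have "(1 + x) ^ m = 0"
    by (simp add: poly_f)
  then have x: "x = -1"
    by (simp add: add_eq_0_iff)
  with vx have "\<zeta> * (-1) ^ e * y = \<zeta> * (-1) ^ e * y\<^sub>0"
    unfolding y0 by simp
  then have "y = y\<^sub>0"
    using zeta_nonzero by simp
  with x show "(x, y) = (-1, y\<^sub>0)"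
    by simp
next
  assume "(x, y) = (-1, y\<^sub>0)"
  then show "curve_fun_eval d torsion_fun x y = 0"
    using y0 by (simp add: curve_fun_eval_torsion_fun)
qed

lemma principal_multiple_m: "principal_multiple f d (-1, y\<^sub>0) m"
proof -
  have nonzero: "torsion_fun 0 \<noteq> 0" "torsion_fun 1 \<noteq> 0"
    using v_minus_one zeta_nonzero by (auto simp: torsion_fun_def)
  then have "\<exists>j<d. torsion_fun j \<noteq> 0"
    using d_ge_2 by (intro exI[of _ 0]) simp
  moreover have "pole_order_at_O f d torsion_fun = max (d * degree v) (d * e + n)"
    using pole_order_at_O_linear[OF d_ge_2, of torsion_fun] nonzero zeta_nonzero degree_f
    by (simp add: torsion_fun_def degree_linear_power)
  ultimately show ?thesis
    unfolding principal_multiple_def using d_ge_2 torsion_fun_zero_iff degree_v m_eq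
    by (intro exI[of _ torsion_fun]) (auto simp: mult.commute)
qed

lemma e_d_less_n:
  assumes "3 \<le> d"
  shows "e * d < n"
proof (cases "e = 0")
  case False
  then have "3 \<le> d * e"
    using assms mult_le_mono[of 3 d 1 e] by simp
  moreover have "3 * (d * e - 1) \<le> d * (d * e - 1)"
    using assms by (rule mult_le_mono1)
  ultimately show ?thesis
    using m_large m_eq mult.commute[of e d] by linarith
qed (use d_less_n in simp)

lemma d_not_dvd_n: "\<not> d dvd n"
  using coprime_common_divisor[OF coprime_n_d _ dvd_refl] d_ge_2 by auto

definition vanishes_only_at_P :: "'a poly \<Rightarrow> 'a poly \<Rightarrow> bool" where
  "vanishes_only_at_P A B \<longleftrightarrow>
     (\<forall>x y. y ^ d = poly f x \<longrightarrow> (poly A x + poly B x * y = 0 \<longleftrightarrow> (x, y) = (-1, y\<^sub>0)))"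

lemma principal_multiple_below_m_linear:
  assumes "principal_multiple f d (-1, y\<^sub>0) k" "k < m"
  obtains A B where "vanishes_only_at_P A B" "d * degree A \<le> k" "B \<noteq> 0 \<Longrightarrow> d * degree B + n \<le> k"
proof -
  obtain a where pole: "pole_order_at_O f d a = k"
    and zeros: "\<forall>x y. y ^ d = poly f x \<longrightarrow> (curve_fun_eval d a x y = 0 \<longleftrightarrow> (x, y) = (-1, y\<^sub>0))"
    using assms(1) unfolding principal_multiple_def by blast
  have bound: "d * degree (a j) + n * j \<le> k" if "j < d" "a j \<noteq> 0" for j
    using pole_order_at_O_ge[of j d a f, OF that] pole degree_f by simp
  have "a j = 0" if "2 \<le> j" "j < d" for j
  proof (rule ccontr)
    assume "a j \<noteq> 0"
    then have "n * 2 \<le> k"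
      using bound[OF that(2)] mult_le_mono2[OF that(1), of n] by linarith
    moreover have "e * d < n"
      using e_d_less_n that by simp
    ultimately show False
      using assms(2) m_eq by linarith
  qed
  then have "curve_fun_eval d a x y = poly (a 0) x + poly (a 1) x * y" for x y
    by (rule curve_fun_eval_linear[OF d_ge_2])
  then have "vanishes_only_at_P (a 0) (a 1)"
    using zeros unfolding vanishes_only_at_P_def by simp
  moreover have "d * degree (a 0) \<le> k"
    using bound[of 0] d_ge_2 by (cases "a 0 = 0") simp_all
  moreover have "a 1 \<noteq> 0 \<Longrightarrow> d * degree (a 1) + n \<le> k"
    using bound[of 1] d_ge_2 by simp
  ultimately show ?thesis
    using that by blast
qed

lemma vanishes_only_at_P_at_minus_one:
  assumes "vanishes_only_at_P A B"
  shows "poly A (-1) + poly B (-1) * y\<^sub>0 = 0" "poly B (-1) \<noteq> 0"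
proof -
  show zero: "poly A (-1) + poly B (-1) * y\<^sub>0 = 0"
    using assms y0_power unfolding vanishes_only_at_P_def by simp
  obtain w :: 'a where w: "w ^ d = 1" "w \<noteq> 1"
    using alg_closed_root_of_unity[OF alg_closed d_ge_2] by blast
  show "poly B (-1) \<noteq> 0"
  proof
    assume B: "poly B (-1) = 0"
    have "(w * y\<^sub>0) ^ d = poly f (-1)"
      using w y0_power by (simp add: power_mult_distrib)
    moreover have "poly A (-1) + poly B (-1) * (w * y\<^sub>0) = 0"
      using zero B by simp
    ultimately have "w * y\<^sub>0 = y\<^sub>0"
      using assms unfolding vanishes_only_at_P_def by blast
    with w y0_nonzero show False
      by simp
  qed
qed

text \<open>The product of the conjugates A + B \<omega> y, \<omega>^d = 1, i.e. the norm of A + B y down to K(x).\<close>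

definition curve_norm :: "'a poly \<Rightarrow> 'a poly \<Rightarrow> 'a poly" where
  "curve_norm A B = A ^ d - (- B) ^ d * f"

lemma curve_norm_eq_power:
  assumes "vanishes_only_at_P A B"
  shows "curve_norm A B = smult (lead_coeff (curve_norm A B)) ([:1,1:] ^ degree (curve_norm A B))"
proof -
  have root: "x = -1" if "poly (curve_norm A B) x = 0" for x
  proof -
    have norm: "poly A x ^ d = (- poly B x) ^ d * poly f x"
      using that by (simp add: curve_norm_def)
    obtain y where y: "y ^ d = poly f x" "poly A x + poly B x * y = 0"
    proof (cases "poly B x = 0")
      case True
      obtain y where "y ^ d = poly f x"
        using alg_closed_nth_root[OF alg_closed, of d] d_ge_2 by (metis not_numeral_le_zero not_gr0)
      with True norm d_ge_2 show ?thesis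
        using that by (simp add: power_0_left)
    next
      case False
      have "(- poly A x) ^ d = poly B x ^ d * poly f x"
        using norm by (simp add: power_minus[of "poly A x"] power_minus[of "poly B x"] mult_ac)
      then have "(- poly A x) ^ d / poly B x ^ d = poly f x"
        using False by simp
      then have "(- poly A x / poly B x) ^ d = poly f x"
        by (simp only: power_divide)
      then show ?thesis
        using that False by simp
    qed
    with assms show "x = -1"
      unfolding vanishes_only_at_P_def by blast
  qed
  then have "curve_norm A B \<noteq> 0"
    using poly_0[of 0] by (metis zero_neq_neg_one)
  from alg_closed_single_root_poly[OF alg_closed this root] show ?thesis
    by simp
qed

lemma degree_curve_norm:
  assumes "B \<noteq> 0"
  shows "degree (curve_norm A B) = max (d * degree A) (d * degree B + n)"
proof -
  have deg_A: "degree (A ^ d) = d * degree A"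
    using d_ge_2 by (cases "A = 0") (simp_all add: degree_power_eq power_0_left)
  have "f \<noteq> 0"
    using degree_f d_less_n by auto
  then have deg_B: "degree ((- B) ^ d * f) = d * degree B + n"
    using assms degree_f by (simp add: degree_mult_eq degree_power_eq)
  have "d * degree A \<noteq> d * degree B + n"
    using d_not_dvd_n by (metis dvd_add_right_iff dvd_triv_left)
  then show ?thesis
    unfolding curve_norm_def using deg_A deg_B
    by (cases "d * degree A < d * degree B + n") (simp_all add: degree_diff_eq_left degree_diff_eq_right)
qed

definition eliminant :: "'a poly \<Rightarrow> 'a poly \<Rightarrow> 'a poly" where
  "eliminant A B = smult \<zeta> ([:0,1:] ^ e * A) + B * v"

lemma power_dvd_eliminant:
  assumes norm: "curve_norm A B = smult \<kappa> ([:1,1:] ^ K)" and "K \<le> m"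
    and B: "poly B (-1) \<noteq> 0" and P: "poly A (-1) + poly B (-1) * y\<^sub>0 = 0"
  shows "[:1,1:] ^ K dvd eliminant A B"
proof -
  define U where "U = smult \<zeta> ([:0,1:] ^ e * A)"
  define V where "V = (- B) * v"
  define S where "S = (\<Sum>i<d. V ^ (d - Suc i) * U ^ i)"
  have "U ^ d = - ([:0,1:] ^ (e * d) * A ^ d)"
    by (simp add: U_def smult_power power_mult_distrib power_mult zeta)
  moreover have "V ^ d = (- B) ^ d * v ^ d"
    unfolding V_def by (rule power_mult_distrib)
  moreover have "v ^ d = [:1,1:] ^ m - [:0,1:] ^ (e * d) * f"
    by (simp add: f_eq)
  ultimately have "U ^ d - V ^ d = - ([:0,1:] ^ (e * d) * curve_norm A B) - (- B) ^ d * [:1,1:] ^ m"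
    by (simp add: curve_norm_def algebra_simps)
  also have "\<dots> = [:1,1:] ^ K * - (smult \<kappa> ([:0,1:] ^ (e * d)) + (- B) ^ d * [:1,1:] ^ (m - K))"
    using \<open>K \<le> m\<close> by (simp add: norm algebra_simps flip: power_add)
  finally have "[:1,1:] ^ K dvd (U - V) * S"
    unfolding S_def power_diff_sumr2[symmetric] by simp
  moreover have "poly U (-1) = poly V (-1)"
  proof -
    have "poly A (-1) = - (poly B (-1) * y\<^sub>0)"
      using P by (simp add: eq_neg_iff_add_eq_0)
    then have "poly U (-1) = - (\<zeta> * (-1) ^ e * y\<^sub>0) * poly B (-1)"
      by (simp add: U_def)
    then show ?thesis
      by (simp add: y0 V_def)
  qed
  then have "poly S (-1) = of_nat d * poly V (-1) ^ (d - 1)"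
    by (simp add: S_def poly_sum flip: power_add)
  then have "poly S (-1) \<noteq> 0"
    using B v_minus_one d_ge_2 by (simp add: V_def)
  ultimately have "[:1,1:] ^ K dvd U - V"
    using linear_power_dvd_mult_cancel[of "-1" K "U - V" S] by simp
  then show ?thesis
    by (simp add: eliminant_def U_def V_def)
qed

lemma eliminant_nonzero:
  assumes "B \<noteq> 0" "degree B < e"
  shows "eliminant A B \<noteq> 0"
proof
  assume "eliminant A B = 0"
  then have "B * v = - smult \<zeta> ([:0,1:] ^ e * A)"
    unfolding eliminant_def by (simp add: eq_neg_iff_add_eq_0 add.commute)
  then have "[:0,1:] ^ e dvd B * v"
    by (simp add: dvd_smult)
  then have "[:0,1:] ^ e dvd B"
    using linear_power_dvd_mult_cancel[of 0 e B v] v_zero by simp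
  with assms show False
    using dvd_imp_degree_le[of "[:0,1:] ^ e" B] by (simp add: degree_linear_power)
qed

lemma degree_eliminant_le:
  assumes "d * degree A \<le> K" "d * degree B + n \<le> K"
  shows "d * degree (eliminant A B) \<le> K + e * d"
proof -
  have "degree (eliminant A B) \<le> max (e + degree A) (degree B + degree v)"
    unfolding eliminant_def
    using degree_add_le_max[of "smult \<zeta> ([:0,1:] ^ e * A)" "B * v"] degree_mult_le[of B v]
      degree_mult_le[of "[:0,1:] ^ e" A] degree_smult_le[of \<zeta> "[:0,1:] ^ e * A"]
    by (simp add: degree_linear_power)
  then have "d * degree (eliminant A B) \<le> d * (e + degree A)
      \<or> d * degree (eliminant A B) \<le> d * (degree B + degree v)"
    by (auto simp: max_def split: if_splits)
  with assms degree_v m_eq show ?thesis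
    by (auto simp: algebra_simps)
qed

lemma eliminant_constant_B:
  assumes "eliminant A [:b:] = smult \<rho> ([:1,1:] ^ K)" "b \<noteq> 0" "2 \<le> e"
  shows "m = d * K"
proof -
  define P where "P = smult \<rho> ([:1,1:] ^ K)"
  define V where "V = smult b v"
  have "P = smult \<zeta> ([:0,1:] ^ e * A) + V"
    using assms(1) by (simp add: P_def V_def eliminant_def)
  then have "P - V = smult \<zeta> ([:0,1:] ^ e * A)"
    by simp
  then have "[:0,1:] ^ e dvd P - V"
    by (simp add: dvd_smult)
  then have "[:0,1:] ^ e dvd P ^ d - V ^ d"
    by (simp add: power_diff_sumr2)
  moreover have "[:0,1:] ^ e dvd smult (b ^ d) ([:1,1:] ^ m - v ^ d)"
    using f_eq[symmetric] d_ge_2 by (simp add: dvd_smult le_imp_power_dvd)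
  ultimately have "[:0,1:] ^ e dvd smult (b ^ d) ([:1,1:] ^ m - v ^ d) - (P ^ d - V ^ d)"
    by (rule dvd_diff[rotated])
  also have "smult (b ^ d) ([:1,1:] ^ m - v ^ d) - (P ^ d - V ^ d)
      = smult (b ^ d) ([:1,1:] ^ m) - smult (\<rho> ^ d) ([:1,1:] ^ (d * K))"
    by (simp add: P_def V_def smult_power mult.commute[of d K] power_mult smult_diff_right)
  finally have "[:0,1:] ^ 2 dvd smult (b ^ d) ([:1,1:] ^ m) - smult (\<rho> ^ d) ([:1,1:] ^ (d * K))"
    using assms(3) by (meson dvd_trans le_imp_power_dvd)
  with assms(2) show ?thesis
    by (simp add: X_squared_dvd_diff_linear_powers)
qed

lemma not_principal_multiple_below_m:
  assumes "k < m"
  shows "\<not> principal_multiple f d (-1, y\<^sub>0) k"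
proof
  assume "principal_multiple f d (-1, y\<^sub>0) k"
  then obtain A B where AB: "vanishes_only_at_P A B"
    and deg_A: "d * degree A \<le> k" and deg_B: "B \<noteq> 0 \<Longrightarrow> d * degree B + n \<le> k"
    using principal_multiple_below_m_linear assms by blast
  note at_P = vanishes_only_at_P_at_minus_one[OF AB]
  then have "B \<noteq> 0"
    by auto
  define K where "K = degree (curve_norm A B)"
  have K: "K = max (d * degree A) (d * degree B + n)"
    unfolding K_def using degree_curve_norm[OF \<open>B \<noteq> 0\<close>] .
  with deg_A deg_B[OF \<open>B \<noteq> 0\<close>] assms have "n \<le> K" "K < m"
    by simp_all
  define W where "W = eliminant A B"
  have dvd: "[:1,1:] ^ K dvd W"
    using power_dvd_eliminant[OF curve_norm_eq_power[OF AB] _ at_P(2,1)] \<open>K < m\<close>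
    by (simp add: W_def K_def)
  have "d * degree B < d * e"
    using K \<open>K < m\<close> m_eq by (simp add: mult.commute)
  then have "W \<noteq> 0"
    using eliminant_nonzero[OF \<open>B \<noteq> 0\<close>] by (simp add: W_def)
  with dvd have "K \<le> degree W"
    using dvd_imp_degree_le by (fastforce simp: degree_linear_power)
  have deg_W: "d * degree W \<le> K + e * d"
    using degree_eliminant_le K by (simp add: W_def)
  show False
  proof (cases "d = 2")
    case False
    with d_ge_2 have "3 \<le> d"
      by simp
    then have "3 * K \<le> d * K"
      by simp
    also have "\<dots> \<le> d * degree W"
      using \<open>K \<le> degree W\<close> by simp
    also have "\<dots> < 2 * K"
      using deg_W e_d_less_n[OF \<open>3 \<le> d\<close>] \<open>n \<le> K\<close> by linarith
    finally show False
      by simp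
  next
    case True
    have "2 * e \<le> n + 1"
      using m_large m_eq True by simp
    with True K deg_W \<open>K \<le> degree W\<close> d_less_n
    have "degree W \<le> K" "degree B = 0" "2 \<le> e"
      by (simp_all add: max_def split: if_splits)
    then obtain \<rho> b where "W = smult \<rho> ([:1,1:] ^ K)" "B = [:b:]"
      using dvd_degree_le_imp_smult[OF dvd \<open>W \<noteq> 0\<close>] by (metis degree_eq_zeroE degree_linear_power)
    with \<open>B \<noteq> 0\<close> \<open>2 \<le> e\<close> have "m = d * K"
      using eliminant_constant_B by (auto simp: W_def)
    then have "d dvd n + e * d"
      using m_eq by simp
    with d_not_dvd_n show False
      by (simp add: dvd_add_left_iff)
  qed
qed

end

theorem proposition6p2:
  fixes v :: "'a::field_char_0 poly" and d n e :: nat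
  assumes "alg_closed TYPE('a)"
    and "1 < d" and "d < n" and "coprime n d"
    and "0 < e"
    and "n + e * d > d * (d * e - 1)"
    and "d * degree v < n + e * d"
    and "\<forall>a. a \<noteq> 0 \<and> poly ([:1, 1:] ^ (n + e * d) - v ^ d) a = 0 \<longrightarrow>
              order a ([:1, 1:] ^ (n + e * d) - v ^ d) = 1"
    and "order 0 ([:1, 1:] ^ (n + e * d) - v ^ d) = e * d \<or>
         order 0 ([:1, 1:] ^ (n + e * d) - v ^ d) = e * d + 1"
  shows "let m = n + e * d; f = ([:1, 1:] ^ m - v ^ d) div [:0, 1:] ^ (e * d) in
           [:0, 1:] ^ (e * d) dvd ([:1, 1:] ^ m - v ^ d) \<and> degree f = n \<and> rsquarefree f \<and>
           (\<exists>y. y ^ d = poly f (-1) \<and> point_order f d (-1, y) m)"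
proof -
  define m where "m = n + e * d"
  define F where "F = [:1,1:] ^ m - v ^ d"
  define f where "f = F div [:0,1:] ^ (e * d)"
  have "2 \<le> d" "2 \<le> m" "F \<noteq> 0" "degree F = m"
    using assms(2,3,7) degree_linear_power_minus_power[of d v m] by (auto simp: F_def m_def)
  note order_0 = assms(9)[folded m_def, folded F_def]
  have v_nonzero: "poly v (-1) \<noteq> 0" "poly v 0 \<noteq> 0"
    using simple_roots_imp_poly_nonzero[of d m v] assms(2,5,7,8,9) \<open>2 \<le> m\<close>
    by (auto simp: m_def)
  have dvd: "[:0,1:] ^ (e * d) dvd F"
    using order_0 \<open>F \<noteq> 0\<close> order_divides[of 0 "e * d" F] by auto
  then have F_eq: "[:0,1:] ^ (e * d) * f = F"
    by (simp add: f_def)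
  with \<open>F \<noteq> 0\<close> \<open>degree F = m\<close> have "degree f = n"
    by (auto simp: degree_mult_eq degree_linear_power m_def)
  obtain \<zeta> :: 'a where "\<zeta> ^ d = -1"
    using alg_closed_nth_root[OF assms(1), of d] \<open>2 \<le> d\<close> by (metis not_numeral_le_zero not_gr0)
  then interpret torsion_point v f d n e m \<zeta> "poly v (-1) / (\<zeta> * (-1) ^ e)"
    using assms F_eq \<open>degree f = n\<close> v_nonzero by unfold_locales (auto simp: m_def F_def power_0_left)
  have "point_order f d (-1, poly v (-1) / (\<zeta> * (-1) ^ e)) m"
    unfolding point_order_def using principal_multiple_m not_principal_multiple_below_m \<open>2 \<le> m\<close> by auto
  moreover have "rsquarefree f"
    unfolding f_def using rsquarefree_div_X_power[OF \<open>F \<noteq> 0\<close> order_0] assms(8) by (simp add: F_def m_def)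
  ultimately show ?thesis
    using dvd \<open>degree f = n\<close> y0_power
    unfolding Let_def m_def[symmetric] F_def[symmetric] f_def[symmetric] by blast
qed

end
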